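(* Let $G(n)=\sum_{k=0}^n(-1)^k\binom nk \binom{2k}{k+1}\binom{2n-2k}{n-k}$ for integers $n\ge 0$. Then $(n+1)^2G(n)=16n^2G(n-2)$ for all $n\ge 2$, and consequently for all $n\ge 0$, $$G(2n+1)=-\binom{2n+1}{n}^2,\qquad G(2n)=0.$$
   Context: Binomial coefficients $\binom{m}{j}$ are zero when $j>m$. *)

theory Defs
  imports Main
begin

definition G :: "nat \<Rightarrow> int" where
  "G n = (\<Sum>k=0..n. (-1)^k * int (n choose k) * int ((2*k) choose (k+1))
                        * int ((2*n - 2*k) choose (n - k)))"

end

theory Submission
  imports Defs Complex_Main
begin

text \<open>
  Write F(n,k) for the summand of G(n). It is hypergeometric in n and k, and creative telescoping
  (Zeilberger) produces the certificate H(n,k) = -(k^2-1) P(n,k) F(n+2,k) / ((n+1)^2 (2n-2k+3))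
  with an explicit cubic P, for which
    (n+3)^2 F(n+2,k) - 16 (n+2)^2 F(n,k) = H(n,k+1) - H(n,k)     (0 \<le> k \<le> n+2).
  For 1 \<le> k \<le> n, dividing by F(n,k) turns this into a polynomial identity; the edges k = 0,
  n+1, n+2 are checked directly. Summing over k, the right side telescopes to H(n,n+3) - H(n,0) = 0,
  which is the recurrence. The closed forms follow by induction from G(0) = 0 and G(1) = -1,
  using binom(2n+3,n+1) = 2(2n+3)/(n+2) binom(2n+1,n).
\<close>

definition G_term :: "nat \<Rightarrow> nat \<Rightarrow> int" where
  "G_term n k = (-1)^k * int (n choose k) * int ((2*k) choose (k+1)) * int ((2*n - 2*k) choose (n - k))"

lemma G_eq_sum_G_term: "G n = (\<Sum>k=0..n. G_term n k)"
  unfolding G_def G_term_def ..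

lemma G_term_eq_0: "n < k \<Longrightarrow> G_term n k = 0"
  unfolding G_term_def by simp

lemma G_term_n_0: "G_term n 0 = 0"
  unfolding G_term_def by simp

lemma G_term_add:
  "G_term (k + q) k = (-1)^k * int ((k + q) choose k) * int ((2*k) choose (k+1)) * int ((2*q) choose q)"
  unfolding G_term_def by (simp add: diff_mult_distrib2 [symmetric])

lemma real_binomial_Suc_Suc:
  "real (Suc m choose Suc k) = (real m + 1) / (real k + 1) * real (m choose k)"
  using Suc_times_binomial_eq[of m k] by (simp add: field_simps flip: of_nat_mult del: binomial_Suc_Suc)

lemma real_binomial_add_Suc:
  "real ((k + Suc q) choose k) = (real (k + q) + 1) / (real q + 1) * real ((k + q) choose k)"
  using binomial_absorb_comp[of "k + Suc q" k]
  by (simp add: field_simps flip: of_nat_mult del: binomial_Suc_Suc)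

lemma real_central_binomial_Suc:
  "real ((2 * Suc q) choose Suc q) = 2 * (2 * real q + 1) / (real q + 1) * real ((2 * q) choose q)"
proof -
  have "2 * Suc q = Suc (q + Suc q)" "2 * q = q + q"
    by simp_all
  then show ?thesis
    by (simp only: real_binomial_Suc_Suc real_binomial_add_Suc)
       (simp add: divide_simps; simp add: algebra_simps)
qed

lemma real_binomial_double_Suc:
  assumes "1 \<le> k"
  shows "real ((2 * Suc k) choose Suc (Suc k)) =
    2 * (real k + 1) * (2 * real k + 1) / (real k * (real k + 2)) * real ((2 * k) choose Suc k)"
proof -
  obtain j where k: "k = Suc j"
    using assms by (cases k) auto
  have "2 * Suc k = Suc (Suc k + Suc j)" "2 * k = Suc k + j" "real j = real k - 1"
    unfolding k by simp_all
  then show ?thesis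
    by (simp only: real_binomial_Suc_Suc real_binomial_add_Suc)
       (simp add: divide_simps del: binomial_Suc_Suc; simp add: algebra_simps del: binomial_Suc_Suc)
qed

lemma real_binomial_odd_Suc:
  "real ((2 * n + 3) choose (n + 1)) = 2 * (2 * real n + 3) / (real n + 2) * real ((2 * n + 1) choose n)"
proof -
  have "2 * n + 3 = Suc n + Suc (Suc n)" "2 * n + 1 = n + Suc n" "n + 1 = Suc n" "Suc n + Suc n = 2 * Suc n" "n + n = 2 * n"
    by simp_all
  then show ?thesis
    by (simp only: real_binomial_add_Suc real_central_binomial_Suc)
       (simp add: divide_simps del: binomial_Suc_Suc; simp add: algebra_simps del: binomial_Suc_Suc)
qed

lemma real_G_term_shift_upper:
  "real_of_int (G_term (k + Suc (Suc q)) k) =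
     4 * (real (k + q) + 1) * (real (k + q) + 2) * (2 * real q + 1) * (2 * real q + 3)
       / ((real q + 1)^2 * (real q + 2)^2) * real_of_int (G_term (k + q) k)"
  unfolding G_term_add
  by (simp only: of_int_mult of_int_of_nat_eq real_binomial_add_Suc real_central_binomial_Suc)
     (simp add: divide_simps power2_eq_square del: binomial_Suc_Suc;
      simp add: algebra_simps del: binomial_Suc_Suc)

lemma real_G_term_shift_both:
  assumes "1 \<le> k"
  shows "real_of_int (G_term (k + Suc (Suc q)) (Suc k)) =
     - 4 * (real (k + q) + 1) * (real (k + q) + 2) * (2 * real k + 1) * (2 * real q + 1)
       / ((real q + 1)^2 * real k * (real k + 2)) * real_of_int (G_term (k + q) k)"
proof -
  have "k + Suc (Suc q) = Suc k + Suc q" "Suc k + Suc q = Suc (k + Suc q)" "Suc k + 1 = Suc (Suc k)"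
    by simp_all
  note shifts = this
  show ?thesis
    using assms
    unfolding shifts(1) unfolding G_term_add unfolding shifts(2,3)
    by (simp only: of_int_mult of_int_of_nat_eq real_binomial_Suc_Suc real_binomial_add_Suc
        real_central_binomial_Suc real_binomial_double_Suc[OF assms])
       (simp add: divide_simps power2_eq_square del: binomial_Suc_Suc;
        simp add: algebra_simps del: binomial_Suc_Suc)
qed

lemma real_G_term_diag:
  "real_of_int (G_term (n + 2) (n + 2)) =
     - (2 * real n + 3) / ((real n + 1) * (real n + 3)) * real_of_int (G_term (n + 2) (n + 1))"
proof -
  have "G_term (n + 2) (n + 2) = (-1)^n * int ((2 * Suc (Suc n)) choose Suc (Suc (Suc n)))"
    unfolding G_term_def by (simp del: binomial_Suc_Suc)
  moreover have "G_term (n + 2) (n + 1) = - ((-1)^n * 2 * int (Suc (Suc n)) * int ((2 * Suc n) choose Suc (Suc n)))"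
    unfolding G_term_def by (simp add: numeral_2_eq_2 del: binomial_Suc_Suc)
  ultimately show ?thesis
    by (simp only: of_int_minus of_int_mult of_int_of_nat_eq real_binomial_double_Suc[of "Suc n"])
       (simp add: divide_simps del: binomial_Suc_Suc; simp add: algebra_simps del: binomial_Suc_Suc)
qed

definition G_cert_poly :: "real \<Rightarrow> real \<Rightarrow> real" where
  "G_cert_poly n k = 4*n^3 + 21*n^2 + 34*n + 17 - (6*n^2 + 22*n + 18) * k + (2*n + 4) * k^2"

text \<open>The denominator 2(n-k)+3 is odd, hence never 0; at k = n+2 it equals -1.\<close>

definition G_cert :: "nat \<Rightarrow> nat \<Rightarrow> real" where
  "G_cert n k = - ((real k)^2 - 1) * G_cert_poly (real n) (real k) * real_of_int (G_term (n + 2) k)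
                  / ((real n + 1)^2 * (2 * (real n - real k) + 3))"

lemma G_cert_poly_identity:
  fixes k q :: real
  shows "(k+q+3)^2 * (k+q+1)^2 * (2*q+1) * (2*q+3) - 4 * (k+q+2) * (k+q+1) * (q+1)^2 * (q+2)^2
       = (2*k+1) * (q+2)^2 * G_cert_poly (k+q) (k+1) + (k^2-1) * (2*q+1) * G_cert_poly (k+q) k"
  unfolding G_cert_poly_def by (simp add: power2_eq_square power3_eq_cube algebra_simps)

lemma G_cert_poly_diag:
  "G_cert_poly (real n) (real (n + 1)) = (real n + 1) * (real n + 3)"
  "G_cert_poly (real n) (real (n + 2)) = - ((real n + 1) * (real n + 3))"
  unfolding G_cert_poly_def by (simp_all add: power2_eq_square power3_eq_cube algebra_simps)

lemma G_cert_rational_identity: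
  fixes x y :: real
  assumes "x + y + 1 \<noteq> 0" "y + 1 \<noteq> 0" "y + 2 \<noteq> 0"
  shows "(x + y + 3)^2 * (4 * (x + y + 1) * (x + y + 2) * (2*y + 1) * (2*y + 3) / ((y + 1)^2 * (y + 2)^2))
           - 16 * (x + y + 2)^2
       = 4 * (x + y + 2) * (2*x + 1) * G_cert_poly (x + y) (x + 1) / ((x + y + 1) * (y + 1)^2)
         + 4 * (x^2 - 1) * (x + y + 2) * (2*y + 1) * G_cert_poly (x + y) x / ((x + y + 1) * (y + 1)^2 * (y + 2)^2)"
proof -
  have "(x + y + 3)^2 * (4 * (x + y + 1) * (x + y + 2) * (2*y + 1) * (2*y + 3) / ((y + 1)^2 * (y + 2)^2))
          - 16 * (x + y + 2)^2
      = 4 * (x + y + 2) / ((x + y + 1) * (y + 1)^2 * (y + 2)^2) *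
        ((x+y+3)^2 * (x+y+1)^2 * (2*y+1) * (2*y+3) - 4 * (x+y+2) * (x+y+1) * (y+1)^2 * (y+2)^2)"
    using assms by (simp add: divide_simps; simp add: algebra_simps power2_eq_square)
  also have "\<dots> = 4 * (x + y + 2) / ((x + y + 1) * (y + 1)^2 * (y + 2)^2) *
      ((2*x+1) * (y+2)^2 * G_cert_poly (x+y) (x+1) + (x^2-1) * (2*y+1) * G_cert_poly (x+y) x)"
    by (simp only: G_cert_poly_identity)
  also have "\<dots> = 4 * (x + y + 2) * (2*x + 1) * G_cert_poly (x + y) (x + 1) / ((x + y + 1) * (y + 1)^2)
         + 4 * (x^2 - 1) * (x + y + 2) * (2*y + 1) * G_cert_poly (x + y) x / ((x + y + 1) * (y + 1)^2 * (y + 2)^2)"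
    using assms by (simp add: divide_simps; simp add: algebra_simps power2_eq_square)
  finally show ?thesis .
qed

lemma G_term_telescope_interior:
  assumes "1 \<le> k"
  shows "(real (k + q) + 3)^2 * real_of_int (G_term (k + q + 2) k)
           - 16 * (real (k + q) + 2)^2 * real_of_int (G_term (k + q) k)
         = G_cert (k + q) (k + 1) - G_cert (k + q) k"
proof -
  define x y T where "x = real k" and "y = real q" and "T = real_of_int (G_term (k + q) k)"
  have "x \<ge> 1" "y \<ge> 0"
    using assms by (simp_all add: x_def y_def)
  have n2: "k + q + 2 = k + Suc (Suc q)"
    by simp
  define a b c0 c1 where
    "a = 4 * (x + y + 1) * (x + y + 2) * (2*y + 1) * (2*y + 3) / ((y + 1)^2 * (y + 2)^2)" and
    "b = - 4 * (x + y + 1) * (x + y + 2) * (2*x + 1) * (2*y + 1) / ((y + 1)^2 * x * (x + 2))" and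
    "c0 = 4 * (x^2 - 1) * (x + y + 2) * (2*y + 1) * G_cert_poly (x + y) x / ((x + y + 1) * (y + 1)^2 * (y + 2)^2)" and
    "c1 = 4 * (x + y + 2) * (2*x + 1) * G_cert_poly (x + y) (x + 1) / ((x + y + 1) * (y + 1)^2)"
  have shift_n: "real_of_int (G_term (k + q + 2) k) = a * T"
    unfolding n2 real_G_term_shift_upper a_def x_def y_def T_def by simp
  have shift_k: "real_of_int (G_term (k + q + 2) (k + 1)) = b * T"
    unfolding n2 Suc_eq_plus1 [symmetric] real_G_term_shift_both[OF assms] b_def x_def y_def T_def by simp
  have cert_k: "G_cert (k + q) k = - c0 * T"
    unfolding G_cert_def shift_n using \<open>x \<ge> 1\<close> \<open>y \<ge> 0\<close>
    by (simp add: a_def c0_def x_def [symmetric] y_def [symmetric] divide_simps;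
        simp add: algebra_simps power2_eq_square)
  have cert_Suc_k: "G_cert (k + q) (k + 1) = c1 * T"
    unfolding G_cert_def shift_k using \<open>x \<ge> 1\<close> \<open>y \<ge> 0\<close>
    by (simp add: b_def c1_def x_def [symmetric] y_def [symmetric] divide_simps;
        simp add: algebra_simps power2_eq_square)
  have coeff: "(x + y + 3)^2 * a - 16 * (x + y + 2)^2 = c1 + c0"
    unfolding a_def c0_def c1_def by (rule G_cert_rational_identity) (use \<open>x \<ge> 1\<close> \<open>y \<ge> 0\<close> in auto)
  have "(real (k + q) + 3)^2 * (a * T) - 16 * (real (k + q) + 2)^2 * T
      = ((x + y + 3)^2 * a - 16 * (x + y + 2)^2) * T"
    by (simp add: x_def y_def algebra_simps)
  also have "\<dots> = c1 * T - (- c0 * T)"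
    unfolding coeff by (simp add: algebra_simps)
  finally show ?thesis
    unfolding shift_n cert_k cert_Suc_k T_def .
qed

lemma G_cert_0: "G_cert n 0 = 0"
  unfolding G_cert_def by (simp add: G_term_n_0)

lemma G_cert_1: "G_cert n 1 = 0"
  unfolding G_cert_def by simp

lemma G_cert_eq_0: "n + 2 < k \<Longrightarrow> G_cert n k = 0"
  unfolding G_cert_def by (simp add: G_term_eq_0)

lemma G_cert_diag: "G_cert n (n + 2) = - ((real n + 3)^2 * real_of_int (G_term (n + 2) (n + 2)))"
proof -
  have "real n + 1 \<noteq> 0"
    by linarith
  then show ?thesis
    unfolding G_cert_def G_cert_poly_diag
    by (simp add: divide_simps; simp add: algebra_simps power2_eq_square)
qed

lemma G_term_telescope_last:
  "(real n + 3)^2 * real_of_int (G_term (n + 2) (n + 1)) = G_cert n (n + 2) - G_cert n (n + 1)"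
proof -
  have "real n + 1 \<noteq> 0" "real n + 3 \<noteq> 0"
    by linarith+
  then show ?thesis
    unfolding G_cert_diag real_G_term_diag G_cert_def [of n "n + 1"] G_cert_poly_diag
    by (simp add: divide_simps; simp add: algebra_simps power2_eq_square)
qed

lemma G_term_telescope:
  assumes "k \<le> n + 2"
  shows "(real n + 3)^2 * real_of_int (G_term (n + 2) k) - 16 * (real n + 2)^2 * real_of_int (G_term n k)
         = G_cert n (k + 1) - G_cert n k"
proof -
  consider "k = 0" | "1 \<le> k" "k \<le> n" | "k = n + 1" | "k = n + 2"
    using assms by linarith
  then show ?thesis
  proof cases
    case 1
    then show ?thesis
      using G_cert_1 by (simp add: G_term_n_0 G_cert_0)
  next
    case 2
    then obtain q where "n = k + q"
      using le_Suc_ex by blast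
    then show ?thesis
      using G_term_telescope_interior[OF \<open>1 \<le> k\<close>, of q] by simp
  next
    case 3
    then show ?thesis
      using G_term_telescope_last[of n] by (simp add: G_term_eq_0)
  next
    case 4
    then show ?thesis
      using G_cert_diag[of n] by (simp add: G_term_eq_0 G_cert_eq_0)
  qed
qed

lemma G_eq_sum_G_term_upto: "n \<le> m \<Longrightarrow> G n = (\<Sum>k=0..m. G_term n k)"
  unfolding G_eq_sum_G_term by (rule sum.mono_neutral_left) (auto simp: G_term_eq_0)

lemma G_recurrence: "(int n + 3)^2 * G (n + 2) = 16 * (int n + 2)^2 * G n"
proof -
  have "(real n + 3)^2 * real_of_int (G (n + 2)) - 16 * (real n + 2)^2 * real_of_int (G n)
      = (\<Sum>k=0..n+2. (real n + 3)^2 * real_of_int (G_term (n + 2) k) - 16 * (real n + 2)^2 * real_of_int (G_term n k))"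
    unfolding G_eq_sum_G_term[of "n + 2"] G_eq_sum_G_term_upto[of n "n + 2", OF le_add1]
    by (simp only: of_int_sum sum_distrib_left sum_subtractf)
  also have "\<dots> = (\<Sum>k=0..n+2. G_cert n (Suc k) - G_cert n k)"
    by (intro sum.cong refl) (metis G_term_telescope Suc_eq_plus1 atLeastAtMost_iff)
  also have "\<dots> = 0"
    by (subst sum_Suc_diff) (simp_all add: G_cert_0 G_cert_eq_0)
  finally have "real_of_int ((int n + 3)^2 * G (n + 2)) = real_of_int (16 * (int n + 2)^2 * G n)"
    by simp
  then show ?thesis
    by (simp only: of_int_eq_iff)
qed

lemma G_even: "G (2 * n) = 0"
proof (induction n)
  case 0
  then show ?case by (simp add: G_def)
next
  case (Suc n)
  have "(int (2 * n) + 3)^2 * G (2 * n + 2) = 0"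
    using G_recurrence[of "2 * n"] Suc.IH by simp
  then show ?case
    by (simp add: add_pos_nonneg)
qed

lemma G_odd: "G (2 * n + 1) = - ((int ((2 * n + 1) choose n))^2)"
proof (induction n)
  case 0
  then show ?case by (simp add: G_def numeral_2_eq_2)
next
  case (Suc n)
  have "(int (2 * n + 1) + 3)^2 * G (2 * n + 3) = 16 * (int (2 * n + 1) + 2)^2 * G (2 * n + 1)"
    using G_recurrence[of "2 * n + 1"] by (simp add: numeral_3_eq_3)
  then have "real_of_int ((int (2 * n + 1) + 3)^2 * G (2 * n + 3)) = real_of_int (16 * (int (2 * n + 1) + 2)^2 * G (2 * n + 1))"
    by (rule arg_cong)
  then have "(real n + 2)^2 * real_of_int (G (2 * n + 3)) = 4 * (2 * real n + 3)^2 * real_of_int (G (2 * n + 1))"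
    by (simp add: algebra_simps power2_eq_square)
  then have "real_of_int (G (2 * n + 3)) = - ((real ((2 * n + 3) choose (n + 1)))^2)"
    unfolding Suc.IH real_binomial_odd_Suc
    by (simp add: divide_simps power2_eq_square add_pos_nonneg; simp add: algebra_simps)
  then have "real_of_int (G (2 * n + 3)) = real_of_int (- ((int ((2 * n + 3) choose (n + 1)))^2))"
    by (simp only: of_int_minus of_int_power of_int_of_nat_eq)
  moreover have "Suc n = n + 1" "2 * (n + 1) + 1 = 2 * n + 3"
    by simp_all
  ultimately show ?case
    by (simp only: of_int_eq_iff)
qed

theorem mainTheorem4:
  shows "(\<forall>n::nat. n \<ge> 2 \<longrightarrow> (int n + 1)^2 * G n = 16 * (int n)^2 * G (n - 2))
       \<and> (\<forall>n::nat. G (2*n+1) = - ((int ((2*n+1) choose n))^2) \<and> G (2*n) = 0)"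
proof (intro conjI allI impI)
  fix n :: nat
  assume "n \<ge> 2"
  then obtain m where "n = m + 2"
    using le_Suc_ex by (metis add.commute)
  then show "(int n + 1)^2 * G n = 16 * (int n)^2 * G (n - 2)"
    using G_recurrence[of m] by (simp add: algebra_simps)
qed (simp_all only: G_odd G_even)

end
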